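(* Let $\mathbf{C}$ be a locally small category, $\Omega$ an object, $\Phi\colon\mathbf{C}^{\mathrm{op}}\to\mathbf{Pos}$ a functor whose fibres have all meets preserved by reindexing $f^*=\Phi f$, and $d_\Omega\in\Phi\Omega$. Let $\alpha_Y(S)=\bigwedge_{k\in S}k^*(d_\Omega)$, $\gamma_Y(d)=\{k\in\mathbf{C}(Y,\Omega)\mid d\preceq k^*(d_\Omega)\}$ and $\mathrm{cl}_Y=\gamma_Y\circ\alpha_Y$ for every object $Y$. Let $F\colon\mathbf{C}\to\mathbf{C}$ be a functor, $(\mathit{ev}_\lambda\colon F\Omega\to\Omega)_{\lambda\in\Lambda}$ a family of morphisms, and $\Lambda_Y(S)=\{\mathit{ev}_\lambda\circ Fh\mid\lambda\in\Lambda,h\in S\}$ for $S\subseteq\mathbf{C}(Y,\Omega)$. Fix an object $X$, a set $\Theta_X\subseteq\mathbf{C}(X,\Omega)$ of constants, a closure operator $\mathrm{cl}'_X$ on $(\mathcal{P}(\mathbf{C}(X,\Omega)),\subseteq)$, and an $F$-coalgebra $c\colon X\to FX$, and define $$\mathrm{lo}_X(S)=\mathcal{P}(c^\bullet)\big(\Lambda_X(\mathrm{cl}'_X(S))\big)\cup\Theta_X .$$ If $\mathrm{cl}'_X$ is compatible, i.e. $\Lambda_X(\mathrm{cl}'_X(\mathrm{cl}_X(S)))\subseteq\mathrm{cl}_{FX}(\Lambda_X(\mathrm{cl}'_X(S)))$ for all $S\subseteq\mathbf{C}(X,\Omega)$, then $\mathrm{lo}_X$ is $\mathrm{cl}_X$-compatible: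 $\mathrm{lo}_X(\mathrm{cl}_X(S))\subseteq\mathrm{cl}_X(\mathrm{lo}_X(S))$ for all $S\subseteq\mathbf{C}(X,\Omega)$.
   Context: A closure operator on a poset is a monotone, idempotent, extensive map. For $g\colon A\to B$, $g^\bullet\colon\mathbf{C}(B,\Omega)\to\mathbf{C}(A,\Omega)$ is precomposition with $g$, and $\mathcal{P}(g^\bullet)$ is its direct image on subsets; $c^\bullet\colon\mathbf{C}(FX,\Omega)\to\mathbf{C}(X,\Omega)$. *)

theory Defs
  imports Main
begin

record ('o, 'm) category =
  Obj  :: "'o set"
  Mor  :: "'m set"
  Dom  :: "'m \<Rightarrow> 'o"
  Cod  :: "'m \<Rightarrow> 'o"
  Comp :: "'m \<Rightarrow> 'm \<Rightarrow> 'm"   (* Comp g f = g \<circ> f *)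
  Id   :: "'o \<Rightarrow> 'm"

definition hom :: "('o, 'm) category \<Rightarrow> 'o \<Rightarrow> 'o \<Rightarrow> 'm set" where
  "hom C A B = {f \<in> Mor C. Dom C f = A \<and> Cod C f = B}"

definition category :: "('o, 'm) category \<Rightarrow> bool" where
  "category C \<longleftrightarrow>
     (\<forall>f \<in> Mor C. Dom C f \<in> Obj C \<and> Cod C f \<in> Obj C) \<and>
     (\<forall>A \<in> Obj C. Id C A \<in> hom C A A) \<and>
     (\<forall>A B D f g. f \<in> hom C A B \<longrightarrow> g \<in> hom C B D \<longrightarrow> Comp C g f \<in> hom C A D) \<and>
     (\<forall>A B f. f \<in> hom C A B \<longrightarrow> Comp C (Id C B) f = f \<and> Comp C f (Id C A) = f) \<and>
     (\<forall>A B D E f g h. f \<in> hom C A B \<longrightarrow> g \<in> hom C B D \<longrightarrow> h \<in> hom C D E \<longrightarrow>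
        Comp C h (Comp C g f) = Comp C (Comp C h g) f)"

definition endofunctor :: "('o, 'm) category \<Rightarrow> ('o \<Rightarrow> 'o) \<Rightarrow> ('m \<Rightarrow> 'm) \<Rightarrow> bool" where
  "endofunctor C Fo Fm \<longleftrightarrow>
     (\<forall>A \<in> Obj C. Fo A \<in> Obj C) \<and>
     (\<forall>A B f. f \<in> hom C A B \<longrightarrow> Fm f \<in> hom C (Fo A) (Fo B)) \<and>
     (\<forall>A \<in> Obj C. Fm (Id C A) = Id C (Fo A)) \<and>
     (\<forall>A B D f g. f \<in> hom C A B \<longrightarrow> g \<in> hom C B D \<longrightarrow>
        Fm (Comp C g f) = Comp C (Fm g) (Fm f))"

record ('o, 'm, 'p) indexed_poset =
  Fib :: "'o \<Rightarrow> 'p set"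
  Le  :: "'o \<Rightarrow> 'p \<Rightarrow> 'p \<Rightarrow> bool"
  Re  :: "'m \<Rightarrow> 'p \<Rightarrow> 'p"             (* reindexing f^* = \<Phi> f *)

definition is_glb :: "('o, 'm, 'p) indexed_poset \<Rightarrow> 'o \<Rightarrow> 'p set \<Rightarrow> 'p \<Rightarrow> bool" where
  "is_glb P A S m \<longleftrightarrow> m \<in> Fib P A \<and> (\<forall>s \<in> S. Le P A m s) \<and>
     (\<forall>x \<in> Fib P A. (\<forall>s \<in> S. Le P A x s) \<longrightarrow> Le P A x m)"

definition meet :: "('o, 'm, 'p) indexed_poset \<Rightarrow> 'o \<Rightarrow> 'p set \<Rightarrow> 'p" where
  "meet P A S = (THE m. is_glb P A S m)"

definition meet_preserving_indexed_poset ::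
    "('o, 'm) category \<Rightarrow> ('o, 'm, 'p) indexed_poset \<Rightarrow> bool" where
  "meet_preserving_indexed_poset C P \<longleftrightarrow>
     \<comment> \<open>each fibre is a poset\<close>
     (\<forall>A \<in> Obj C. (\<forall>x \<in> Fib P A. Le P A x x) \<and>
        (\<forall>x \<in> Fib P A. \<forall>y \<in> Fib P A. \<forall>z \<in> Fib P A. Le P A x y \<longrightarrow> Le P A y z \<longrightarrow> Le P A x z) \<and>
        (\<forall>x \<in> Fib P A. \<forall>y \<in> Fib P A. Le P A x y \<longrightarrow> Le P A y x \<longrightarrow> x = y)) \<and>
     \<comment> \<open>reindexing along f : A \<rightarrow> B is a monotone map \<Phi> B \<rightarrow> \<Phi> A\<close>
     (\<forall>A B f. f \<in> hom C A B \<longrightarrow> (\<forall>x \<in> Fib P B. Re P f x \<in> Fib P A) \<and>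
        (\<forall>x \<in> Fib P B. \<forall>y \<in> Fib P B. Le P B x y \<longrightarrow> Le P A (Re P f x) (Re P f y))) \<and>
     \<comment> \<open>contravariant functoriality\<close>
     (\<forall>A \<in> Obj C. \<forall>x \<in> Fib P A. Re P (Id C A) x = x) \<and>
     (\<forall>A B D f g. f \<in> hom C A B \<longrightarrow> g \<in> hom C B D \<longrightarrow>
        (\<forall>x \<in> Fib P D. Re P (Comp C g f) x = Re P f (Re P g x))) \<and>
     \<comment> \<open>every fibre has all meets\<close>
     (\<forall>A \<in> Obj C. \<forall>S \<subseteq> Fib P A. \<exists>m. is_glb P A S m) \<and>
     \<comment> \<open>reindexing preserves all meets\<close>
     (\<forall>A B f S m. f \<in> hom C A B \<longrightarrow> S \<subseteq> Fib P B \<longrightarrow> is_glb P B S m \<longrightarrow>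
        is_glb P A (Re P f ` S) (Re P f m))"

definition alpha ::
    "('o, 'm) category \<Rightarrow> ('o, 'm, 'p) indexed_poset \<Rightarrow> 'p \<Rightarrow> 'o \<Rightarrow> 'm set \<Rightarrow> 'p" where
  "alpha C P d\<^sub>\<Omega> Y S = meet P Y ((\<lambda>k. Re P k d\<^sub>\<Omega>) ` S)"

definition gamma ::
    "('o, 'm) category \<Rightarrow> ('o, 'm, 'p) indexed_poset \<Rightarrow> 'o \<Rightarrow> 'p \<Rightarrow> 'o \<Rightarrow> 'p \<Rightarrow> 'm set" where
  "gamma C P \<Omega> d\<^sub>\<Omega> Y d = {k \<in> hom C Y \<Omega>. Le P Y d (Re P k d\<^sub>\<Omega>)}"

definition cl ::
    "('o, 'm) category \<Rightarrow> ('o, 'm, 'p) indexed_poset \<Rightarrow> 'o \<Rightarrow> 'p \<Rightarrow> 'o \<Rightarrow> 'm set \<Rightarrow> 'm set" where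
  "cl C P \<Omega> d\<^sub>\<Omega> Y S = gamma C P \<Omega> d\<^sub>\<Omega> Y (alpha C P d\<^sub>\<Omega> Y S)"

definition Lam :: "('o, 'm) category \<Rightarrow> ('m \<Rightarrow> 'm) \<Rightarrow> 'l set \<Rightarrow> ('l \<Rightarrow> 'm) \<Rightarrow> 'm set \<Rightarrow> 'm set" where
  "Lam C Fm L ev S = {Comp C (ev l) (Fm h) | l h. l \<in> L \<and> h \<in> S}"

definition closure_operator_on :: "'a set \<Rightarrow> ('a set \<Rightarrow> 'a set) \<Rightarrow> bool" where
  "closure_operator_on U c \<longleftrightarrow>
     (\<forall>S \<subseteq> U. c S \<subseteq> U) \<and>
     (\<forall>S T. S \<subseteq> T \<longrightarrow> T \<subseteq> U \<longrightarrow> c S \<subseteq> c T) \<and>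
     (\<forall>S \<subseteq> U. S \<subseteq> c S) \<and>
     (\<forall>S \<subseteq> U. c (c S) = c S)"

definition precomp_img :: "('o, 'm) category \<Rightarrow> 'm \<Rightarrow> 'm set \<Rightarrow> 'm set" where
  "precomp_img C c T = (\<lambda>k. Comp C k c) ` T"

definition lo ::
    "('o, 'm) category \<Rightarrow> ('m \<Rightarrow> 'm) \<Rightarrow> 'l set \<Rightarrow> ('l \<Rightarrow> 'm) \<Rightarrow> 'm set \<Rightarrow>
     ('m set \<Rightarrow> 'm set) \<Rightarrow> 'm \<Rightarrow> 'm set \<Rightarrow> 'm set" where
  "lo C Fm L ev \<Theta> cl' c S = precomp_img C c (Lam C Fm L ev (cl' S)) \<union> \<Theta>"

end

theory Submission
  imports Defs
begin

text \<open>Reindexing along the coalgebra \<open>c : X \<rightarrow> F X\<close> preserves meets, so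
  \<open>c\<^sup>*(\<alpha>\<^sub>F\<^sub>X T) = \<alpha>\<^sub>X(c\<^sup>\<bullet> T)\<close>; consequently \<open>c\<^sup>\<bullet>\<close> maps \<open>cl\<^sub>F\<^sub>X T\<close> into \<open>cl\<^sub>X (c\<^sup>\<bullet> T)\<close>.
  Applied to \<open>T = \<Lambda>\<^sub>X(cl'\<^sub>X S)\<close> after the compatibility of \<open>cl'\<^sub>X\<close>, and combined with
  monotonicity and extensivity of \<open>cl\<^sub>X\<close> (which absorbs the constants \<open>\<Theta>\<^sub>X\<close>), this gives the
  claim.\<close>

lemma comp_in_hom:
  "category C \<Longrightarrow> f \<in> hom C A B \<Longrightarrow> g \<in> hom C B D \<Longrightarrow> Comp C g f \<in> hom C A D"
  unfolding category_def by (elim conjE) metis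

lemma endofunctor_obj: "endofunctor C Fo Fm \<Longrightarrow> A \<in> Obj C \<Longrightarrow> Fo A \<in> Obj C"
  unfolding endofunctor_def by (elim conjE) metis

lemma endofunctor_hom:
  "endofunctor C Fo Fm \<Longrightarrow> f \<in> hom C A B \<Longrightarrow> Fm f \<in> hom C (Fo A) (Fo B)"
  unfolding endofunctor_def by (elim conjE) metis

lemma precomp_img_subset_hom:
  assumes "category C" and "c \<in> hom C A B" and "T \<subseteq> hom C B D"
  shows "precomp_img C c T \<subseteq> hom C A D"
  using assms unfolding precomp_img_def by (blast intro: comp_in_hom)

lemma Lam_subset_hom:
  assumes "category C" and "endofunctor C Fo Fm" and "\<forall>l \<in> L. ev l \<in> hom C (Fo \<Omega>) \<Omega>"
    and "S \<subseteq> hom C X \<Omega>"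
  shows "Lam C Fm L ev S \<subseteq> hom C (Fo X) \<Omega>"
  using assms unfolding Lam_def by (blast intro: comp_in_hom endofunctor_hom)

context
  fixes C :: "('o, 'm) category" and P :: "('o, 'm, 'p) indexed_poset"
  assumes Phi: "meet_preserving_indexed_poset C P"
begin

lemma Le_trans:
  "A \<in> Obj C \<Longrightarrow> x \<in> Fib P A \<Longrightarrow> y \<in> Fib P A \<Longrightarrow> z \<in> Fib P A \<Longrightarrow>
    Le P A x y \<Longrightarrow> Le P A y z \<Longrightarrow> Le P A x z"
  using Phi unfolding meet_preserving_indexed_poset_def by (elim conjE) metis

lemma Le_antisym:
  "A \<in> Obj C \<Longrightarrow> x \<in> Fib P A \<Longrightarrow> y \<in> Fib P A \<Longrightarrow> Le P A x y \<Longrightarrow> Le P A y x \<Longrightarrow> x = y"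
  using Phi unfolding meet_preserving_indexed_poset_def by (elim conjE) metis

lemma Re_in_Fib: "f \<in> hom C A B \<Longrightarrow> x \<in> Fib P B \<Longrightarrow> Re P f x \<in> Fib P A"
  using Phi unfolding meet_preserving_indexed_poset_def by (elim conjE) metis

lemma Re_mono:
  "f \<in> hom C A B \<Longrightarrow> x \<in> Fib P B \<Longrightarrow> y \<in> Fib P B \<Longrightarrow> Le P B x y \<Longrightarrow>
    Le P A (Re P f x) (Re P f y)"
  using Phi unfolding meet_preserving_indexed_poset_def by (elim conjE) metis

lemma Re_comp:
  "f \<in> hom C A B \<Longrightarrow> g \<in> hom C B D \<Longrightarrow> x \<in> Fib P D \<Longrightarrow>
    Re P (Comp C g f) x = Re P f (Re P g x)"
  using Phi unfolding meet_preserving_indexed_poset_def by (elim conjE) metis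

lemma Re_is_glb:
  "f \<in> hom C A B \<Longrightarrow> S \<subseteq> Fib P B \<Longrightarrow> is_glb P B S m \<Longrightarrow> is_glb P A (Re P f ` S) (Re P f m)"
  using Phi unfolding meet_preserving_indexed_poset_def by (elim conjE) metis

lemma is_glb_exists: "A \<in> Obj C \<Longrightarrow> S \<subseteq> Fib P A \<Longrightarrow> \<exists>m. is_glb P A S m"
  using Phi unfolding meet_preserving_indexed_poset_def by (elim conjE) metis

lemma is_glb_unique: "A \<in> Obj C \<Longrightarrow> is_glb P A S m \<Longrightarrow> is_glb P A S m' \<Longrightarrow> m = m'"
  using Le_antisym unfolding is_glb_def by blast

lemma meet_eqI: "A \<in> Obj C \<Longrightarrow> is_glb P A S m \<Longrightarrow> meet P A S = m"
  unfolding meet_def using is_glb_unique by blast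

lemma is_glb_meet:
  assumes "A \<in> Obj C" and "S \<subseteq> Fib P A"
  shows "is_glb P A S (meet P A S)"
proof -
  obtain m where "is_glb P A S m"
    using is_glb_exists[OF assms] by blast
  then show ?thesis using meet_eqI[OF assms(1)] by simp
qed

lemma is_glb_alpha:
  assumes "Y \<in> Obj C" and "d \<in> Fib P \<Omega>" and "S \<subseteq> hom C Y \<Omega>"
  shows "is_glb P Y ((\<lambda>k. Re P k d) ` S) (alpha C P d Y S)"
  unfolding alpha_def using assms Re_in_Fib by (intro is_glb_meet) auto

lemma alpha_antimono:
  assumes Y: "Y \<in> Obj C" and d: "d \<in> Fib P \<Omega>" and "S \<subseteq> T" and T: "T \<subseteq> hom C Y \<Omega>"
  shows "Le P Y (alpha C P d Y T) (alpha C P d Y S)"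
proof -
  have glb_T: "is_glb P Y ((\<lambda>k. Re P k d) ` T) (alpha C P d Y T)"
    using is_glb_alpha[OF Y d T] .
  have glb_S: "is_glb P Y ((\<lambda>k. Re P k d) ` S) (alpha C P d Y S)"
    using is_glb_alpha[OF Y d] \<open>S \<subseteq> T\<close> T by blast
  have "\<forall>s \<in> (\<lambda>k. Re P k d) ` S. Le P Y (alpha C P d Y T) s"
    using glb_T \<open>S \<subseteq> T\<close> unfolding is_glb_def by blast
  with glb_S glb_T show ?thesis unfolding is_glb_def by blast
qed

lemma cl_mono:
  assumes Y: "Y \<in> Obj C" and d: "d \<in> Fib P \<Omega>" and ST: "S \<subseteq> T" and T: "T \<subseteq> hom C Y \<Omega>"
  shows "cl C P \<Omega> d Y S \<subseteq> cl C P \<Omega> d Y T"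
proof
  fix k assume "k \<in> cl C P \<Omega> d Y S"
  then have k: "k \<in> hom C Y \<Omega>" and le: "Le P Y (alpha C P d Y S) (Re P k d)"
    unfolding cl_def gamma_def by auto
  have "alpha C P d Y T \<in> Fib P Y"
    using is_glb_alpha[OF Y d T] unfolding is_glb_def by blast
  moreover have "alpha C P d Y S \<in> Fib P Y"
    using is_glb_alpha[OF Y d, of S] ST T unfolding is_glb_def by blast
  ultimately have "Le P Y (alpha C P d Y T) (Re P k d)"
    using Le_trans[OF Y _ _ Re_in_Fib[OF k d] alpha_antimono[OF Y d ST T] le] by simp
  with k show "k \<in> cl C P \<Omega> d Y T" unfolding cl_def gamma_def by auto
qed

lemma cl_extensive:
  assumes "Y \<in> Obj C" and "d \<in> Fib P \<Omega>" and "S \<subseteq> hom C Y \<Omega>"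
  shows "S \<subseteq> cl C P \<Omega> d Y S"
  using is_glb_alpha[OF assms] assms(3) unfolding cl_def gamma_def is_glb_def by blast

lemma Re_alpha:
  assumes A: "A \<in> Obj C" and B: "B \<in> Obj C" and d: "d \<in> Fib P \<Omega>"
    and c: "c \<in> hom C A B" and T: "T \<subseteq> hom C B \<Omega>"
  shows "Re P c (alpha C P d B T) = alpha C P d A (precomp_img C c T)"
proof -
  have "Re P c ` (\<lambda>k. Re P k d) ` T = (\<lambda>k. Re P k d) ` precomp_img C c T"
    unfolding precomp_img_def image_image
    by (rule image_cong) (use Re_comp[OF c _ d] T in auto)
  moreover have "(\<lambda>k. Re P k d) ` T \<subseteq> Fib P B"
    using T Re_in_Fib[OF _ d] by blast
  then have "is_glb P A (Re P c ` (\<lambda>k. Re P k d) ` T) (Re P c (alpha C P d B T))"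
    using Re_is_glb[OF c _ is_glb_alpha[OF B d T]] by simp
  ultimately show ?thesis
    unfolding alpha_def by (intro meet_eqI[OF A, symmetric]) simp
qed

lemma precomp_img_cl_subset:
  assumes cat: "category C" and A: "A \<in> Obj C" and B: "B \<in> Obj C" and d: "d \<in> Fib P \<Omega>"
    and c: "c \<in> hom C A B" and T: "T \<subseteq> hom C B \<Omega>"
  shows "precomp_img C c (cl C P \<Omega> d B T) \<subseteq> cl C P \<Omega> d A (precomp_img C c T)"
proof
  fix x assume "x \<in> precomp_img C c (cl C P \<Omega> d B T)"
  then obtain k where x: "x = Comp C k c" and k: "k \<in> hom C B \<Omega>"
    and le: "Le P B (alpha C P d B T) (Re P k d)"
    unfolding precomp_img_def cl_def gamma_def by blast
  have "alpha C P d B T \<in> Fib P B"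
    using is_glb_alpha[OF B d T] unfolding is_glb_def by blast
  then have "Le P A (Re P c (alpha C P d B T)) (Re P c (Re P k d))"
    using Re_mono[OF c _ Re_in_Fib[OF k d] le] by simp
  then have "Le P A (alpha C P d A (precomp_img C c T)) (Re P x d)"
    using Re_alpha[OF A B d c T] Re_comp[OF c k d] x by simp
  moreover have "x \<in> hom C A \<Omega>" using comp_in_hom[OF cat c k] x by simp
  ultimately show "x \<in> cl C P \<Omega> d A (precomp_img C c T)"
    unfolding cl_def gamma_def by blast
qed

end

theorem proposition3:
  fixes C :: "('o, 'm) category" and P :: "('o, 'm, 'p) indexed_poset"
    and \<Omega> X :: 'o and d\<^sub>\<Omega> :: 'p
    and Fo :: "'o \<Rightarrow> 'o" and Fm :: "'m \<Rightarrow> 'm"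
    and L :: "'l set" and ev :: "'l \<Rightarrow> 'm"
    and \<Theta> :: "'m set" and cl' :: "'m set \<Rightarrow> 'm set" and c :: 'm
  assumes cat: "category C"
    and \<Omega>_obj: "\<Omega> \<in> Obj C" and X_obj: "X \<in> Obj C"
    and Phi: "meet_preserving_indexed_poset C P"
    and d_in: "d\<^sub>\<Omega> \<in> Fib P \<Omega>"
    and F: "endofunctor C Fo Fm"
    and ev: "\<forall>l \<in> L. ev l \<in> hom C (Fo \<Omega>) \<Omega>"
    and Theta: "\<Theta> \<subseteq> hom C X \<Omega>"
    and clop: "closure_operator_on (hom C X \<Omega>) cl'"
    and coalg: "c \<in> hom C X (Fo X)"
    and compat: "\<forall>S \<subseteq> hom C X \<Omega>.
       Lam C Fm L ev (cl' (cl C P \<Omega> d\<^sub>\<Omega> X S))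
         \<subseteq> cl C P \<Omega> d\<^sub>\<Omega> (Fo X) (Lam C Fm L ev (cl' S))"
  shows "\<forall>S \<subseteq> hom C X \<Omega>.
       lo C Fm L ev \<Theta> cl' c (cl C P \<Omega> d\<^sub>\<Omega> X S)
         \<subseteq> cl C P \<Omega> d\<^sub>\<Omega> X (lo C Fm L ev \<Theta> cl' c S)"
proof (intro allI impI)
  fix S assume S: "S \<subseteq> hom C X \<Omega>"
  define T where "T = Lam C Fm L ev (cl' S)"
  have "cl' S \<subseteq> hom C X \<Omega>"
    using clop S unfolding closure_operator_on_def by (elim conjE) metis
  then have T: "T \<subseteq> hom C (Fo X) \<Omega>"
    unfolding T_def by (rule Lam_subset_hom[OF cat F ev])
  have lo_S: "lo C Fm L ev \<Theta> cl' c S = precomp_img C c T \<union> \<Theta>"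
    unfolding lo_def T_def ..
  have lo_S_hom: "lo C Fm L ev \<Theta> cl' c S \<subseteq> hom C X \<Omega>"
    unfolding lo_S using precomp_img_subset_hom[OF cat coalg T] Theta by blast
  have "Lam C Fm L ev (cl' (cl C P \<Omega> d\<^sub>\<Omega> X S)) \<subseteq> cl C P \<Omega> d\<^sub>\<Omega> (Fo X) T"
    using compat S unfolding T_def by blast
  then have "lo C Fm L ev \<Theta> cl' c (cl C P \<Omega> d\<^sub>\<Omega> X S)
      \<subseteq> precomp_img C c (cl C P \<Omega> d\<^sub>\<Omega> (Fo X) T) \<union> \<Theta>"
    unfolding lo_def precomp_img_def by blast
  also have "\<dots> \<subseteq> cl C P \<Omega> d\<^sub>\<Omega> X (precomp_img C c T) \<union> \<Theta>"
    using precomp_img_cl_subset[OF Phi cat X_obj endofunctor_obj[OF F X_obj] d_in coalg T]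
    by blast
  also have "\<dots> \<subseteq> cl C P \<Omega> d\<^sub>\<Omega> X (lo C Fm L ev \<Theta> cl' c S)"
  proof -
    have "precomp_img C c T \<subseteq> lo C Fm L ev \<Theta> cl' c S"
      unfolding lo_S by blast
    from cl_mono[OF Phi X_obj d_in this lo_S_hom] cl_extensive[OF Phi X_obj d_in lo_S_hom]
    show ?thesis unfolding lo_S by blast
  qed
  finally show "lo C Fm L ev \<Theta> cl' c (cl C P \<Omega> d\<^sub>\<Omega> X S)
      \<subseteq> cl C P \<Omega> d\<^sub>\<Omega> X (lo C Fm L ev \<Theta> cl' c S)" .
qed

end
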